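(* Let $\Xi\subseteq\mathbb{R}^d$ be a design space and let $d_{\mathrm{train}}$, $d_{\mathrm{test}}$ be probability densities on $\Xi$ with $d_{\mathrm{train}}(\xi)>0$ for all $\xi\in\Xi$. Let $(\xi,y)$ be distributed with $\xi\sim d_{\mathrm{train}}$ and $y\mid\xi$ drawn from the true data-generating process, and let $f^{\star}(\xi)=\mathbb{E}[y\mid\xi]$ be the true regression function. Let $\mathcal{F}$ be a finite class of functions $\Xi\to\mathbb{R}$, and suppose there is $0<y_{\infty}<\infty$ with $\sup_{f\in\mathcal{F}}\sup_{\xi\in\Xi}|f(\xi)|\le y_\infty$, $\sup_{\xi\in\Xi}|f^{\star}(\xi)|\le y_\infty$ and $|y|\le y_\infty$ almost surely. Let $\bar f=\arg\min_{f\in\mathcal{F}}R_{\mathrm{test}}(f)$, where $R_{\mathrm{test}}(f):=\mathbb{E}_{\xi\sim d_{\mathrm{test}}}[(f(\xi)-f^{\star}(\xi))^2]$. Define $$\mathbb{C}_\infty:=\sup_{\xi\in\Xi}\left|\frac{d_{\mathrm{test}}(\xi)}{d_{\mathrm{train}}(\xi)}\right|,\qquad \mathbb{B}_\infty:=\sup_{\xi\in\Xi}|\bar f(\xi)-f^{\star}(\xi)|.$$ Given $n$ i.i.d. samples $(\xi_i,y_i)_{i=1}^n$ from this training distribution, let $\hat f^{(n)}\in\arg\min_{f\in\mathcal{F}}\frac1n\sum_{i=1}^n(f(\xi_i)-y_i)^2$ be the empirical risk minimizer, and define $$\widehat{\mathbb{A}}(\hat f^{(n)}):=\mathbb{E}_{\xi\sim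 d_{\mathrm{train}}}\big[(\hat f^{(n)}(\xi)-\bar f(\xi))(\bar f(\xi)-f^{\star}(\xi))\big].$$ Then for any $\delta\in(0,1)$, with probability at least $1-\delta$, $$R_{\mathrm{test}}(\hat f^{(n)})\le \mathbb{C}_\infty\cdot\begin{cases}\mathbb{B}_\infty^2+\dfrac{224\,y_\infty^2\log(|\mathcal{F}|/\delta)}{3n}-2\widehat{\mathbb{A}}(\hat f^{(n)}), & \text{if } \widehat{\mathbb{A}}(\hat f^{(n)})<0,\\[2mm] \mathbb{B}_\infty^2+\dfrac{128\,y_\infty^2\log(|\mathcal{F}|/\delta)}{3n}-\sqrt{3}\,\widehat{\mathbb{A}}(\hat f^{(n)}), & \text{if } \widehat{\mathbb{A}}(\hat f^{(n)})\ge 0.\end{cases}$$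
   Context: $d_{\mathrm{train}}$ is the distribution from which training designs are drawn and $d_{\mathrm{test}}$ the distribution on which the predictor is evaluated (covariate shift: the conditional law of $y$ given $\xi$ is the same under both). $|\mathcal{F}|$ is the cardinality of the model class. *)

theory Defs
  imports "HOL-Probability.Probability"
begin

definition prob_density_on :: "'a::euclidean_space set \<Rightarrow> ('a \<Rightarrow> real) \<Rightarrow> bool" where
  "prob_density_on Xi d \<longleftrightarrow> d \<in> borel_measurable borel \<and> (\<forall>x\<in>Xi. 0 \<le> d x) \<and>
     (\<integral>\<^sup>+ x. ennreal (indicator Xi x * d x) \<partial>lborel) = 1"

definition test_risk :: "'a::euclidean_space set \<Rightarrow> ('a \<Rightarrow> real) \<Rightarrow> ('a \<Rightarrow> real) \<Rightarrow> ('a \<Rightarrow> real) \<Rightarrow> real" where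
  "test_risk Xi dtest fstar f = (LINT x:Xi|lborel. dtest x * (f x - fstar x)^2)"

definition emp_risk :: "nat \<Rightarrow> (nat \<Rightarrow> 'a \<times> real) \<Rightarrow> ('a \<Rightarrow> real) \<Rightarrow> real" where
  "emp_risk n S f = (1 / real n) * (\<Sum>i<n. (f (fst (S i)) - snd (S i))^2)"

definition C_inf :: "'a set \<Rightarrow> ('a \<Rightarrow> real) \<Rightarrow> ('a \<Rightarrow> real) \<Rightarrow> real" where
  "C_inf Xi dtrain dtest = (SUP x\<in>Xi. \<bar>dtest x / dtrain x\<bar>)"

definition B_inf :: "'a set \<Rightarrow> ('a \<Rightarrow> real) \<Rightarrow> ('a \<Rightarrow> real) \<Rightarrow> real" where
  "B_inf Xi fbar fstar = (SUP x\<in>Xi. \<bar>fbar x - fstar x\<bar>)"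

definition A_hat :: "'a::euclidean_space set \<Rightarrow> ('a \<Rightarrow> real) \<Rightarrow> ('a \<Rightarrow> real) \<Rightarrow> ('a \<Rightarrow> real) \<Rightarrow> ('a \<Rightarrow> real) \<Rightarrow> real" where
  "A_hat Xi dtrain fbar fstar fh =
     (LINT x:Xi|lborel. dtrain x * ((fh x - fbar x) * (fbar x - fstar x)))"

end

theory Submission
  imports Defs
begin

(* Let Z_f(xi, y) = (f xi - y)^2 - (fbar xi - y)^2 be the excess loss of f over fbar.
   Since fstar is the conditional mean of y, E Z_f = D_f + 2 A_f with D_f = E_train (f - fbar)^2
   and A_f = A_hat f; moreover |Z_f| <= 4 yinf^2 and E Z_f^2 <= 16 yinf^2 D_f. Bernstein's
   inequality and a union bound over F give, with probability at least 1 - delta and for all f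
   in F simultaneously, E Z_f - (1/n) sum_i Z_f(xi_i, y_i) < sqrt (32 a D_f) + 16 a / 3 with
   a = yinf^2 ln (|F| / delta) / n. The empirical risk minimiser has nonpositive empirical excess
   loss, so D + 2 A < sqrt (32 a D) + 16 a / 3, and eliminating D from this self-bounding
   inequality bounds D + 2 A. Finally R_train(fh) = D + 2 A + R_train(fbar),
   R_train(fbar) <= B_inf^2, and R_test <= C_inf R_train by the density ratio bound. *)

section \<open>Elementary inequalities\<close>

lemma square_le_of_abs_le:
  fixes x c :: real
  assumes "\<bar>x\<bar> \<le> c"
  shows "x^2 \<le> c^2"
  using assms by (metis abs_ge_zero power2_abs power_mono)

lemma abs_mult_le_mult:
  fixes x y a b :: real
  assumes "\<bar>x\<bar> \<le> a" "\<bar>y\<bar> \<le> b"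
  shows "\<bar>x * y\<bar> \<le> a * b"
  using assms by (simp add: abs_mult mult_mono')

lemma abs_sq_loss_diff_le:
  fixes a b y c :: real
  assumes "\<bar>a\<bar> \<le> c" "\<bar>b\<bar> \<le> c" "\<bar>y\<bar> \<le> c"
  shows "\<bar>(a - y)^2 - (b - y)^2\<bar> \<le> 4 * c^2"
proof -
  have "\<bar>a - y\<bar> \<le> 2 * c" "\<bar>b - y\<bar> \<le> 2 * c"
    using assms by (auto simp: abs_le_iff)
  then have "(a - y)^2 \<le> 4 * c^2" "(b - y)^2 \<le> 4 * c^2"
    using square_le_of_abs_le by (force simp: power_mult_distrib)+
  moreover have "0 \<le> (a - y)^2" "0 \<le> (b - y)^2"
    by simp_all
  ultimately show ?thesis
    by (intro abs_leI) linarith+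
qed

lemma sq_loss_diff_sq_le:
  fixes a b y c :: real
  assumes "\<bar>a\<bar> \<le> c" "\<bar>b\<bar> \<le> c" "\<bar>y\<bar> \<le> c"
  shows "((a - y)^2 - (b - y)^2)^2 \<le> 16 * c^2 * (a - b)^2"
proof -
  have "\<bar>a + b - 2 * y\<bar> \<le> 4 * c"
    using assms by (auto simp: abs_le_iff)
  then have sum_sq: "(a + b - 2 * y)^2 \<le> (4 * c)^2"
    by (rule square_le_of_abs_le)
  have "((a - y)^2 - (b - y)^2)^2 = (a - b)^2 * (a + b - 2 * y)^2"
    by algebra
  also have "\<dots> \<le> (a - b)^2 * (4 * c)^2"
    using sum_sq by (intro mult_left_mono) auto
  finally show ?thesis
    by (simp add: power_mult_distrib algebra_simps)
qed

lemma exp_le_bernstein_quadratic: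
  fixes x c :: real
  assumes "x \<le> c" "c < 3"
  shows "exp x \<le> 1 + x + 3 * x^2 / (6 - 2 * c)"
proof -
  define g where "g = (\<lambda>x::real. (1 + x + 3 * x^2 / (6 - 2 * x)) * exp (- x))"
  define g' where "g' = (\<lambda>z::real. exp (- z) * (2 * z^3 / (6 - 2 * z)^2))"
  have g': "(g has_real_derivative g' z) (at z)" if "z < 3" for z
  proof -
    have "6 - 2 * z \<noteq> 0" using that by simp
    have "(g has_real_derivative
        (1 + (6 * z * (6 - 2 * z) + 6 * z^2) / (6 - 2 * z)^2) * exp (- z)
        - (1 + z + 3 * z^2 / (6 - 2 * z)) * exp (- z)) (at z)"
      unfolding g_def using that by (auto intro!: derivative_eq_intros simp: power2_eq_square)
    also have "(1 + (6 * z * (6 - 2 * z) + 6 * z^2) / (6 - 2 * z)^2) * exp (- z)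
        - (1 + z + 3 * z^2 / (6 - 2 * z)) * exp (- z) = g' z"
      using \<open>6 - 2 * z \<noteq> 0\<close>
      unfolding g'_def
      by (simp add: divide_simps) (simp add: algebra_simps power2_eq_square power3_eq_cube)
    finally show ?thesis .
  qed
  \<comment> \<open>\<open>g\<close> has its minimum \<open>g 0 = 1\<close> at \<open>0\<close>: its derivative has the sign of \<open>z\<close>.\<close>
  have "g 0 \<le> g x"
  proof (cases "0 \<le> x")
    case True
    show ?thesis
    proof (rule DERIV_nonneg_imp_nondecreasing[OF True])
      fix z assume "0 \<le> z" "z \<le> x"
      then show "\<exists>y. (g has_real_derivative y) (at z) \<and> 0 \<le> y"
        using g'[of z] assms by (intro exI[of _ "g' z"]) (auto simp: g'_def)
    qed
  next
    case False
    show ?thesis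
    proof (rule DERIV_nonpos_imp_nonincreasing[of x 0 g])
      fix z assume "x \<le> z" "z \<le> 0"
      then show "\<exists>y. (g has_real_derivative y) (at z) \<and> y \<le> 0"
        using g'[of z] by (intro exI[of _ "g' z"])
          (auto simp: g'_def power_le_zero_eq intro!: mult_nonneg_nonpos divide_nonpos_nonneg)
    qed (use False in simp)
  qed
  then have "exp x \<le> 1 + x + 3 * x^2 / (6 - 2 * x)"
    by (simp add: g_def exp_minus field_simps)
  also have "\<dots> \<le> 1 + x + 3 * x^2 / (6 - 2 * c)"
    using assms by (intro add_left_mono divide_left_mono) auto
  finally show ?thesis .
qed

lemma exists_bernstein_exponent:
  fixes v b u :: real
  assumes v: "0 \<le> v" and b: "0 < b" and u: "0 < u"
  shows "\<exists>l\<ge>0. l * b < 3 \<and> - l * (sqrt (2 * u * v) + 2 * b * u / 3) + 3 * l^2 * v / (6 - 2 * l * b) \<le> - u"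
proof (cases "v = 0")
  case True
  then show ?thesis
    using b u by (intro exI[of _ "3 / (2 * b)"]) (simp add: field_simps)
next
  case False
  define t where "t = sqrt (2 * u * v) + 2 * b * u / 3"
  define D where "D = v + b * t / 3"
  have "0 < v" using v False by simp
  moreover have "0 < t" unfolding t_def using b u v by (simp add: add_nonneg_pos)
  ultimately have "0 < D" unfolding D_def using b by (simp add: add_pos_pos)
  have denom: "6 - 2 * (t / D) * b = 6 * v / D"
    using \<open>0 < D\<close> by (simp add: D_def field_simps)
  \<comment> \<open>The exponent \<open>t / D\<close> turns the left-hand side into \<open>- t\<^sup>2 / (2 * D)\<close>.\<close>
  have "- (t / D) * t + 3 * (t / D)^2 * v / (6 - 2 * (t / D) * b) = - (t^2 / (2 * D))"
    unfolding denom using \<open>0 < D\<close> \<open>0 < v\<close> by (simp add: field_simps power2_eq_square)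
  moreover have "u \<le> t^2 / (2 * D)"
  proof -
    have "2 * u * D \<le> t^2"
      unfolding D_def t_def using b u v by (simp add: power2_eq_square algebra_simps)
    then show ?thesis
      using \<open>0 < D\<close> by (simp add: field_simps)
  qed
  moreover have "t / D * b < 3"
    using \<open>0 < D\<close> \<open>0 < v\<close> by (simp add: D_def field_simps)
  ultimately show ?thesis
    using \<open>0 < D\<close> \<open>0 < t\<close> unfolding t_def[symmetric]
    by (intro exI[of _ "t / D"]) auto
qed

lemma self_bounding_ineq_imp_le:
  fixes a D A :: real
  assumes a: "0 < a" and D: "0 \<le> D" and h: "D + 2 * A < sqrt (32 * a * D) + 16 * a / 3"
  shows "D + 4 * A \<le> 128 * a / 3"
proof -
  have "sqrt (32 * a * D) \<le> D / 2 + 16 * a"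
  proof (rule real_le_lsqrt)
    show "32 * a * D \<le> (D / 2 + 16 * a)^2"
      using zero_le_power2[of "D / 2 - 16 * a"] by (simp add: power2_eq_square algebra_simps)
  qed (use a D in simp)
  then show ?thesis using h by linarith
qed

lemma self_bounding_ineq_imp_le_nonneg:
  fixes a D A :: real
  assumes a: "0 < a" and D: "0 \<le> D" and A: "0 \<le> A"
    and h: "D + 2 * A < sqrt (32 * a * D) + 16 * a / 3"
  shows "D + (2 + sqrt 3) * A \<le> 128 * a / 3"
proof -
  define q s where "q = sqrt (32 * a * D)" and "s = sqrt 3"
  have q2: "q^2 = 32 * a * D" and s2: "s^2 = 3" and "0 < s"
    using a D by (simp_all add: q_def s_def)
  have "s \<le> 16 / 9"
    unfolding s_def by (rule real_le_lsqrt) (simp_all add: power2_eq_square)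
  \<comment> \<open>weighted AM-GM for \<open>q = sqrt (32 * a * D)\<close>, with equality exactly at the optimal \<open>q\<close>\<close>
  define gap where "gap = s / 2 * D + a * (16 + 28 * s / 3) - (1 + s / 2) * q"
  have "(64 * a / 3) * (s * gap) = (q - a * (32 * s / 3 + 16))^2"
    unfolding gap_def using q2 s2 by algebra
  then have "0 \<le> (64 * a / 3) * (s * gap)"
    by simp
  then have "0 \<le> gap"
    using a \<open>0 < s\<close> by (simp add: zero_le_mult_iff)
  then have amgm: "(1 + s / 2) * q \<le> s / 2 * D + a * (16 + 28 * s / 3)"
    unfolding gap_def by simp
  have "D + (2 + s) * A = D + (1 + s / 2) * (2 * A)"
    by (simp add: algebra_simps)
  also have "\<dots> \<le> D + (1 + s / 2) * (q + 16 * a / 3 - D)"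
    using h \<open>0 < s\<close> unfolding q_def by (intro add_left_mono mult_left_mono) auto
  also have "\<dots> = (1 + s / 2) * q - s / 2 * D + (1 + s / 2) * 16 * a / 3"
    by (simp add: algebra_simps)
  also have "\<dots> \<le> a * (16 + 28 * s / 3) + (1 + s / 2) * 16 * a / 3"
    using amgm by linarith
  also have "\<dots> = 64 * a / 3 + 12 * (a * s)"
    by (simp add: field_simps)
  also have "\<dots> \<le> 128 * a / 3"
    using mult_left_mono[OF \<open>s \<le> 16 / 9\<close>, of a] a by simp
  finally show ?thesis unfolding s_def .
qed

lemma self_bounding_ineq_imp_le_if:
  fixes a D A :: real
  assumes "0 < a" "0 \<le> D" "D + 2 * A < sqrt (32 * a * D) + 16 * a / 3"
  shows "D + 2 * A \<le> (if A < 0 then 224 * a / 3 - 2 * A else 128 * a / 3 - sqrt 3 * A)"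
  \<comment> \<open>for \<open>A < 0\<close> the first bound even gives the constant \<open>128\<close> in place of \<open>224\<close>\<close>
  using self_bounding_ineq_imp_le[OF assms] \<open>0 < a\<close> self_bounding_ineq_imp_le_nonneg[OF assms(1,2) _ assms(3)]
  by (auto simp: algebra_simps)

section \<open>Bernstein's inequality for i.i.d. samples\<close>

lemma (in prob_space) integrable_exp_mult_if_AE_le:
  fixes W :: "'a \<Rightarrow> real"
  assumes [measurable]: "W \<in> borel_measurable M" and W_le: "AE x in M. W x \<le> b" and l: "0 \<le> l"
  shows "integrable M (\<lambda>x. exp (l * W x))"
proof (rule integrable_const_bound[where B = "exp (l * b)"])
  show "AE x in M. norm (exp (l * W x)) \<le> exp (l * b)"
    using W_le by eventually_elim (use l in \<open>simp add: mult_left_mono\<close>)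
qed simp

lemma (in prob_space) expectation_exp_le_bernstein:
  fixes W :: "'a \<Rightarrow> real"
  assumes W_meas[measurable]: "W \<in> borel_measurable M"
    and W_le: "AE x in M. W x \<le> b" and W_sq: "integrable M (\<lambda>x. (W x)^2)"
    and W_mean: "expectation W = 0" and W_var: "expectation (\<lambda>x. (W x)^2) \<le> v"
    and l: "0 \<le> l" "l * b < 3"
  shows "expectation (\<lambda>x. exp (l * W x)) \<le> exp (3 * l^2 * v / (6 - 2 * l * b))"
proof -
  define c where "c = 3 * l^2 / (6 - 2 * l * b)"
  have "0 \<le> c" unfolding c_def using l by (intro divide_nonneg_pos) (auto simp: mult.commute)
  have W_int: "integrable M W"
    by (rule square_integrable_imp_integrable[OF W_meas W_sq])
  have exp_int: "integrable M (\<lambda>x. exp (l * W x))"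
    using W_meas W_le l(1) by (rule integrable_exp_mult_if_AE_le)
  have "expectation (\<lambda>x. exp (l * W x)) \<le> expectation (\<lambda>x. 1 + l * W x + c * (W x)^2)"
  proof (rule integral_mono_AE[OF exp_int])
    show "integrable M (\<lambda>x. 1 + l * W x + c * (W x)^2)"
      using W_int W_sq by simp
    show "AE x in M. exp (l * W x) \<le> 1 + l * W x + c * (W x)^2"
      using W_le
    proof eventually_elim
      case (elim x)
      have "l * W x \<le> l * b" using elim l by (simp add: mult_left_mono)
      then show ?case
        using exp_le_bernstein_quadratic[of "l * W x" "l * b"] l
        by (simp add: c_def power_mult_distrib algebra_simps)
    qed
  qed
  also have "\<dots> = 1 + l * expectation W + c * expectation (\<lambda>x. (W x)^2)"
    using W_int W_sq by (simp add: prob_space)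
  also have "\<dots> \<le> 1 + c * v"
    unfolding W_mean using mult_left_mono[OF W_var \<open>0 \<le> c\<close>] by simp
  also have "\<dots> \<le> exp (c * v)"
    by (rule exp_ge_add_one_self)
  finally show ?thesis by (simp add: c_def)
qed

lemma (in prob_space) measure_PiM_sum_ge_le_exp_moment:
  fixes W :: "'a \<Rightarrow> real"
  assumes [measurable]: "W \<in> borel_measurable M"
    and exp_int: "integrable M (\<lambda>x. exp (l * W x))" and l: "0 \<le> l"
  shows "measure (PiM {..<n} (\<lambda>_. M)) {S \<in> space (PiM {..<n} (\<lambda>_. M)). t \<le> (\<Sum>i<n. W (S i))}
    \<le> exp (- l * t) * expectation (\<lambda>x. exp (l * W x)) ^ n"
proof -
  interpret product: product_prob_space "\<lambda>_. M" "{..<n}" by unfold_locales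
  let ?Q = "PiM {..<n} (\<lambda>_. M)" and ?A = "{S \<in> space (PiM {..<n} (\<lambda>_. M)). t \<le> (\<Sum>i<n. W (S i))}"
  have A[measurable]: "?A \<in> sets ?Q" by measurable
  have "measure ?Q ?A = (\<integral>S. indicator ?A S \<partial>?Q)" by simp
  also have "\<dots> \<le> (\<integral>S. exp (- l * t) * (\<Prod>i<n. exp (l * W (S i))) \<partial>?Q)"
  proof (rule integral_mono)
    show "integrable ?Q (indicator ?A :: _ \<Rightarrow> real)"
      by (intro integrable_real_indicator) (auto simp: less_top[symmetric])
    show "integrable ?Q (\<lambda>S. exp (- l * t) * (\<Prod>i<n. exp (l * W (S i))))"
      using product.product_integrable_prod[of "{..<n}" "\<lambda>_ x. exp (l * W x)"] exp_int by auto
    fix S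
    have "exp (- l * t) * (\<Prod>i<n. exp (l * W (S i))) = exp (l * ((\<Sum>i<n. W (S i)) - t))"
      by (simp add: sum_distrib_left exp_diff exp_sum exp_minus field_simps)
    then show "indicator ?A S \<le> exp (- l * t) * (\<Prod>i<n. exp (l * W (S i)))"
      using l by (auto simp: indicator_def)
  qed
  also have "\<dots> = exp (- l * t) * expectation (\<lambda>x. exp (l * W x)) ^ n"
    using product.product_integral_prod[of "{..<n}" "\<lambda>_ x. exp (l * W x)"] exp_int by simp
  finally show ?thesis .
qed

lemma (in prob_space) bernstein_inequality_PiM:
  fixes W :: "'a \<Rightarrow> real"
  assumes W_meas[measurable]: "W \<in> borel_measurable M"
    and W_le: "AE x in M. W x \<le> b" and W_sq: "integrable M (\<lambda>x. (W x)^2)"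
    and W_mean: "expectation W = 0" and W_var: "expectation (\<lambda>x. (W x)^2) \<le> v"
    and b: "0 < b" and u: "0 < u"
  shows "measure (PiM {..<n} (\<lambda>_. M))
      {S \<in> space (PiM {..<n} (\<lambda>_. M)). real n * (sqrt (2 * u * v) + 2 * b * u / 3) \<le> (\<Sum>i<n. W (S i))}
    \<le> exp (- real n * u)"
proof -
  define t where "t = sqrt (2 * u * v) + 2 * b * u / 3"
  have "0 \<le> v"
    by (intro order_trans[OF _ W_var] integral_nonneg_AE) auto
  then obtain l where l: "0 \<le> l" "l * b < 3" and exponent: "- l * t + 3 * l^2 * v / (6 - 2 * l * b) \<le> - u"
    using exists_bernstein_exponent b u unfolding t_def by blast
  have exp_int: "integrable M (\<lambda>x. exp (l * W x))"
    using W_meas W_le l(1) by (rule integrable_exp_mult_if_AE_le)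
  have "measure (PiM {..<n} (\<lambda>_. M)) {S \<in> space (PiM {..<n} (\<lambda>_. M)). real n * t \<le> (\<Sum>i<n. W (S i))}
      \<le> exp (- l * (real n * t)) * expectation (\<lambda>x. exp (l * W x)) ^ n"
    by (rule measure_PiM_sum_ge_le_exp_moment[OF W_meas exp_int l(1)])
  also have "\<dots> \<le> exp (- l * (real n * t)) * exp (3 * l^2 * v / (6 - 2 * l * b)) ^ n"
    using expectation_exp_le_bernstein[OF W_meas W_le W_sq W_mean W_var l]
    by (intro mult_left_mono power_mono) auto
  also have "\<dots> = exp (real n * (- l * t + 3 * l^2 * v / (6 - 2 * l * b)))"
    by (simp add: algebra_simps flip: exp_of_nat_mult exp_add)
  also have "\<dots> \<le> exp (- real n * u)"
    using mult_left_mono[OF exponent, of "real n"] by simp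
  finally show ?thesis unfolding t_def .
qed

section \<open>Densities and covariate shift\<close>

lemma prob_density_on_nonempty:
  assumes "prob_density_on Xi d"
  shows "Xi \<noteq> {}"
  using assms by (auto simp: prob_density_on_def)

lemma set_integrable_prob_density_mult:
  fixes \<psi> :: "'a::euclidean_space \<Rightarrow> real"
  assumes Xi: "Xi \<in> sets borel" and d: "prob_density_on Xi d"
    and \<psi>[measurable]: "\<psi> \<in> borel_measurable borel" and bound: "\<And>x. x \<in> Xi \<Longrightarrow> \<bar>\<psi> x\<bar> \<le> K"
  shows "set_integrable lborel Xi (\<lambda>x. d x * \<psi> x)"
proof -
  have [measurable]: "d \<in> borel_measurable borel" "Xi \<in> sets borel"
    using d Xi by (simp_all add: prob_density_on_def)
  have "set_integrable lborel Xi d"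
    unfolding set_integrable_def
    using d by (intro integrableI_nonneg) (auto simp: prob_density_on_def indicator_def)
  then have "set_integrable lborel Xi (\<lambda>x. K * d x)"
    by simp
  then show ?thesis
    unfolding set_integrable_def
  proof (rule Bochner_Integration.integrable_bound)
    have "d x * \<bar>\<psi> x\<bar> \<le> \<bar>K\<bar> * d x" if "x \<in> Xi" for x
    proof -
      have "0 \<le> d x" using d that by (simp add: prob_density_on_def)
      then have "d x * \<bar>\<psi> x\<bar> \<le> d x * \<bar>K\<bar>"
        using bound[OF that] by (intro mult_left_mono) auto
      then show ?thesis by (simp add: mult.commute)
    qed
    then show "AE x in lborel. norm (indicator Xi x *\<^sub>R (d x * \<psi> x)) \<le> norm (indicator Xi x *\<^sub>R (K * d x))"
      using d by (intro AE_I2) (auto simp: prob_density_on_def indicator_def abs_mult)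
  qed measurable
qed

lemma C_inf_nonneg:
  assumes "Xi \<noteq> {}" "bdd_above ((\<lambda>x. \<bar>dtest x / dtrain x\<bar>) ` Xi)"
  shows "0 \<le> C_inf Xi dtrain dtest"
  using assms unfolding C_inf_def by (auto intro: cSUP_upper2)

lemma test_risk_le_C_inf_mult:
  fixes f fstar :: "'a::euclidean_space \<Rightarrow> real"
  assumes Xi: "Xi \<in> sets borel"
    and dtrain: "prob_density_on Xi dtrain" and dtrain_pos: "\<forall>x\<in>Xi. 0 < dtrain x"
    and dtest: "prob_density_on Xi dtest" and C_fin: "bdd_above ((\<lambda>x. \<bar>dtest x / dtrain x\<bar>) ` Xi)"
    and [measurable]: "f \<in> borel_measurable borel" "fstar \<in> borel_measurable borel"
    and bound: "\<And>x. x \<in> Xi \<Longrightarrow> \<bar>f x - fstar x\<bar> \<le> K"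
  shows "test_risk Xi dtest fstar f
    \<le> C_inf Xi dtrain dtest * (LINT x:Xi|lborel. dtrain x * (f x - fstar x)^2)"
proof -
  have sq_bound: "\<bar>(f x - fstar x)^2\<bar> \<le> K^2" if "x \<in> Xi" for x
    using square_le_of_abs_le[OF bound[OF that]] by simp
  have "dtest x \<le> C_inf Xi dtrain dtest * dtrain x" if "x \<in> Xi" for x
  proof -
    have "\<bar>dtest x / dtrain x\<bar> \<le> C_inf Xi dtrain dtest"
      unfolding C_inf_def by (rule cSUP_upper[OF that C_fin])
    then have "dtest x / dtrain x \<le> C_inf Xi dtrain dtest"
      by (meson abs_ge_self order_trans)
    then show ?thesis
      using dtrain_pos that by (simp add: divide_le_eq mult.commute)
  qed
  then have "test_risk Xi dtest fstar f \<le> (LINT x:Xi|lborel. C_inf Xi dtrain dtest * (dtrain x * (f x - fstar x)^2))"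
    unfolding test_risk_def
    by (intro set_integral_mono set_integrable_prob_density_mult[OF Xi dtest _ sq_bound]
        set_integrable_mult_right) (auto simp: set_integrable_prob_density_mult[OF Xi dtrain _ sq_bound]
        intro!: mult_right_mono simp flip: mult.assoc)
  then show ?thesis
    by simp
qed

section \<open>Excess loss in the regression model\<close>

definition excess_loss :: "('a \<Rightarrow> real) \<Rightarrow> ('a \<Rightarrow> real) \<Rightarrow> 'a \<times> real \<Rightarrow> real" where
  "excess_loss f g z = (f (fst z) - snd z)^2 - (g (fst z) - snd z)^2"

lemma sum_excess_loss_nonpos_if_emp_risk_le:
  assumes "0 < n" and "emp_risk n S f \<le> emp_risk n S g"
  shows "(\<Sum>i<n. excess_loss f g (S i)) \<le> 0"
  using assms by (simp add: emp_risk_def excess_loss_def sum_subtractf divide_le_cancel)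

locale regression_model = prob_space P
  for P :: "('a::euclidean_space \<times> real) measure" +
  fixes Xi :: "'a set" and dtrain fstar :: "'a \<Rightarrow> real" and yinf :: real
  assumes sets_P: "sets P = sets (borel \<Otimes>\<^sub>M borel)"
    and Xi_borel[measurable]: "Xi \<in> sets borel"
    and dtrain: "prob_density_on Xi dtrain"
    and distr_fst: "distr P borel fst = density lborel (\<lambda>x. ennreal (indicator Xi x * dtrain x))"
    and fstar_measurable[measurable]: "fstar \<in> borel_measurable borel"
    and fstar_cond_exp: "\<And>A. A \<in> sets borel \<Longrightarrow> A \<subseteq> Xi \<Longrightarrow>
          (\<integral>z. indicator A (fst z) * snd z \<partial>P) = (\<integral>x. indicator A x * dtrain x * fstar x \<partial>lborel)"
    and yinf_pos: "0 < yinf"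
    and fstar_bounded: "\<And>x. x \<in> Xi \<Longrightarrow> \<bar>fstar x\<bar> \<le> yinf"
    and snd_bounded: "AE z in P. \<bar>snd z\<bar> \<le> yinf"
begin

lemma measurable_fst_P[measurable]: "fst \<in> borel_measurable P"
  and measurable_snd_P[measurable]: "snd \<in> borel_measurable P"
  by (simp_all add: measurable_cong_sets[OF sets_P refl])

lemma dtrain_measurable[measurable]: "dtrain \<in> borel_measurable borel"
  using dtrain by (simp add: prob_density_on_def)

lemma AE_sample_bounded: "AE z in P. fst z \<in> Xi \<and> \<bar>snd z\<bar> \<le> yinf"
proof -
  have "AE x in distr P borel fst. x \<in> Xi"
    unfolding distr_fst by (subst AE_density) (auto intro!: AE_I2 simp: indicator_def)
  then have "AE z in P. fst z \<in> Xi"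
    by (simp add: AE_distr_iff)
  with snd_bounded show ?thesis
    by eventually_elim simp
qed

lemma integrable_bounded_on_sample_space:
  fixes h :: "'a \<times> real \<Rightarrow> real"
  assumes "h \<in> borel_measurable P" and "\<And>x y. x \<in> Xi \<Longrightarrow> \<bar>y\<bar> \<le> yinf \<Longrightarrow> \<bar>h (x, y)\<bar> \<le> B"
  shows "integrable P h"
proof (rule integrable_const_bound[where B = B])
  show "AE z in P. norm (h z) \<le> B"
    using AE_sample_bounded
  proof eventually_elim
    case (elim z)
    then show ?case using assms(2)[of "fst z" "snd z"] by simp
  qed
qed fact

lemma integral_fst_P:
  assumes [measurable]: "\<psi> \<in> borel_measurable borel"
  shows "(\<integral>z. \<psi> (fst z) \<partial>P) = (LINT x:Xi|lborel. dtrain x * \<psi> x)"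
proof -
  have "(\<integral>z. \<psi> (fst z) \<partial>P) = (\<integral>x. \<psi> x \<partial>distr P borel fst)"
    by (simp add: integral_distr)
  also have "\<dots> = (\<integral>x. (indicator Xi x * dtrain x) *\<^sub>R \<psi> x \<partial>lborel)"
    unfolding distr_fst using dtrain
    by (intro integral_density) (auto simp: prob_density_on_def indicator_def)
  finally show ?thesis
    by (simp add: set_lebesgue_integral_def mult.assoc)
qed

lemma integral_mult_snd_eq_fstar:
  assumes [measurable]: "\<phi> \<in> borel_measurable borel" and bound: "\<And>x. x \<in> Xi \<Longrightarrow> \<bar>\<phi> x\<bar> \<le> K"
  shows "(\<integral>z. \<phi> (fst z) * snd z \<partial>P) = (\<integral>z. \<phi> (fst z) * fstar (fst z) \<partial>P)"
proof -
  define M_fst where "M_fst = vimage_algebra (space P) fst borel"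
  have "subalgebra P M_fst"
    unfolding subalgebra_def M_fst_def by (simp add: sets_image_in_sets)
  then interpret M_fst: finite_measure_subalgebra P M_fst
    by unfold_locales
  have fst_M_fst[measurable]: "fst \<in> borel_measurable M_fst"
    unfolding M_fst_def by (rule measurable_vimage_algebra1) simp
  \<comment> \<open>\<open>fstar \<circ> fst\<close> is the conditional expectation of \<open>snd\<close> given \<open>fst\<close>\<close>
  have "AE z in P. real_cond_exp P M_fst snd z = fstar (fst z)"
  proof (rule M_fst.real_cond_exp_charact)
    fix A assume "A \<in> sets M_fst"
    then obtain B where [measurable]: "B \<in> sets borel" and A: "A = fst -` B \<inter> space P"
      unfolding M_fst_def by (auto simp: sets_vimage_algebra2)
    have "(\<integral>z\<in>A. snd z \<partial>P) = (\<integral>z. indicator B (fst z) * snd z \<partial>P)"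
      unfolding set_lebesgue_integral_def A
      by (intro Bochner_Integration.integral_cong) (auto simp: indicator_def)
    also have "\<dots> = (\<integral>z. indicator (B \<inter> Xi) (fst z) * snd z \<partial>P)"
      using AE_sample_bounded
      by (intro integral_cong_AE) (measurable, auto elim!: eventually_mono simp: indicator_def)
    also have "\<dots> = (\<integral>x. indicator (B \<inter> Xi) x * dtrain x * fstar x \<partial>lborel)"
      by (rule fstar_cond_exp) auto
    also have "\<dots> = (LINT x:Xi|lborel. dtrain x * (indicator B x * fstar x))"
      unfolding set_lebesgue_integral_def
      by (intro Bochner_Integration.integral_cong) (auto simp: indicator_def)
    also have "\<dots> = (\<integral>z. indicator B (fst z) * fstar (fst z) \<partial>P)"
      by (rule integral_fst_P[symmetric]) measurable
    also have "\<dots> = (\<integral>z\<in>A. fstar (fst z) \<partial>P)"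
      unfolding set_lebesgue_integral_def A
      by (intro Bochner_Integration.integral_cong) (auto simp: indicator_def)
    finally show "(\<integral>z\<in>A. snd z \<partial>P) = (\<integral>z\<in>A. fstar (fst z) \<partial>P)" .
  next
    show "integrable P snd"
      by (rule integrable_bounded_on_sample_space[where B = yinf]) auto
    show "integrable P (\<lambda>z. fstar (fst z))"
      by (rule integrable_bounded_on_sample_space[where B = yinf]) (auto simp: fstar_bounded)
    show "(\<lambda>z. fstar (fst z)) \<in> borel_measurable M_fst"
      by measurable
  qed
  then have "(\<integral>z. \<phi> (fst z) * fstar (fst z) \<partial>P) = (\<integral>z. \<phi> (fst z) * real_cond_exp P M_fst snd z \<partial>P)"
    by (intro integral_cong_AE) (measurable, auto elim!: eventually_mono)
  also have "\<dots> = (\<integral>z. \<phi> (fst z) * snd z \<partial>P)"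
  proof (rule M_fst.real_cond_exp_intg(2))
    show "integrable P (\<lambda>z. \<phi> (fst z) * snd z)"
      using bound
      by (intro integrable_bounded_on_sample_space[where B = "K * yinf"])
         (auto simp: abs_mult intro!: mult_mono')
  qed measurable
  finally show ?thesis ..
qed

definition bounded_predictor :: "('a \<Rightarrow> real) \<Rightarrow> bool" where
  "bounded_predictor f \<longleftrightarrow> f \<in> borel_measurable borel \<and> (\<forall>x\<in>Xi. \<bar>f x\<bar> \<le> yinf)"

lemma bounded_predictor_fstar: "bounded_predictor fstar"
  using fstar_bounded by (simp add: bounded_predictor_def)

lemma bounded_predictorD:
  assumes "bounded_predictor f"
  shows "f \<in> borel_measurable borel" and "x \<in> Xi \<Longrightarrow> \<bar>f x\<bar> \<le> yinf"
  using assms by (auto simp: bounded_predictor_def)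

definition train_sq_dist :: "('a \<Rightarrow> real) \<Rightarrow> ('a \<Rightarrow> real) \<Rightarrow> real" where
  "train_sq_dist f g = (\<integral>z. (f (fst z) - g (fst z))^2 \<partial>P)"

definition train_cross_term :: "('a \<Rightarrow> real) \<Rightarrow> ('a \<Rightarrow> real) \<Rightarrow> real" where
  "train_cross_term f g = (\<integral>z. (f (fst z) - g (fst z)) * (g (fst z) - fstar (fst z)) \<partial>P)"

lemma train_sq_dist_nonneg: "0 \<le> train_sq_dist f g"
  by (simp add: train_sq_dist_def)

lemma abs_diff_predictors_le:
  assumes "bounded_predictor f" "bounded_predictor g" "x \<in> Xi"
  shows "\<bar>f x - g x\<bar> \<le> 2 * yinf"
  using bounded_predictorD(2)[OF assms(1,3)] bounded_predictorD(2)[OF assms(2,3)] by linarith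

lemma integrable_mult_diff_predictors:
  assumes f1: "bounded_predictor f1" and f2: "bounded_predictor f2"
    and g1: "bounded_predictor g1" and g2: "bounded_predictor g2"
  shows "integrable P (\<lambda>z. (f1 (fst z) - f2 (fst z)) * (g1 (fst z) - g2 (fst z)))"
proof (rule integrable_bounded_on_sample_space[where B = "2 * yinf * (2 * yinf)"])
  show "(\<lambda>z. (f1 (fst z) - f2 (fst z)) * (g1 (fst z) - g2 (fst z))) \<in> borel_measurable P"
    using bounded_predictorD(1) assms by measurable
  fix x y assume "x \<in> Xi"
  then show "\<bar>(f1 (fst (x, y)) - f2 (fst (x, y))) * (g1 (fst (x, y)) - g2 (fst (x, y)))\<bar> \<le> 2 * yinf * (2 * yinf)"
    using assms by (simp only: fst_conv) (intro abs_mult_le_mult abs_diff_predictors_le)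
qed

lemma integrable_sq_diff_predictors:
  assumes "bounded_predictor f" "bounded_predictor g"
  shows "integrable P (\<lambda>z. (f (fst z) - g (fst z))^2)"
  using integrable_mult_diff_predictors[OF assms assms] by (simp add: power2_eq_square)

lemma integral_excess_loss:
  assumes f: "bounded_predictor f" and g: "bounded_predictor g"
  shows "(\<integral>z. excess_loss f g z \<partial>P) = train_sq_dist f g + 2 * train_cross_term f g"
proof -
  note [measurable] = bounded_predictorD(1)[OF f] bounded_predictorD(1)[OF g]
  have bounds: "\<bar>f x - g x\<bar> \<le> 2 * yinf" "\<bar>fstar x\<bar> \<le> yinf" if "x \<in> Xi" for x
    using abs_diff_predictors_le[OF f g that] fstar_bounded[OF that] by simp_all
  have int_sq: "integrable P (\<lambda>z. (f (fst z) - g (fst z))^2)"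
    by (rule integrable_sq_diff_predictors[OF f g])
  have int_cross: "integrable P (\<lambda>z. (f (fst z) - g (fst z)) * (g (fst z) - fstar (fst z)))"
    by (rule integrable_mult_diff_predictors[OF f g g bounded_predictor_fstar])
  have int_fstar: "integrable P (\<lambda>z. (f (fst z) - g (fst z)) * fstar (fst z))"
    by (intro integrable_bounded_on_sample_space[where B = "2 * yinf * yinf"] abs_mult_le_mult bounds) auto
  have int_snd: "integrable P (\<lambda>z. (f (fst z) - g (fst z)) * snd z)"
    by (intro integrable_bounded_on_sample_space[where B = "2 * yinf * yinf"] abs_mult_le_mult bounds) auto
  have "(\<integral>z. excess_loss f g z \<partial>P) = (\<integral>z. (f (fst z) - g (fst z))^2
      + 2 * ((f (fst z) - g (fst z)) * (g (fst z) - fstar (fst z)))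
      + 2 * ((f (fst z) - g (fst z)) * fstar (fst z) - (f (fst z) - g (fst z)) * snd z) \<partial>P)"
    unfolding excess_loss_def by (intro Bochner_Integration.integral_cong) (auto simp: power2_eq_square algebra_simps)
  also have "\<dots> = (\<integral>z. (f (fst z) - g (fst z))^2 \<partial>P)
      + 2 * (\<integral>z. (f (fst z) - g (fst z)) * (g (fst z) - fstar (fst z)) \<partial>P)
      + 2 * ((\<integral>z. (f (fst z) - g (fst z)) * fstar (fst z) \<partial>P) - (\<integral>z. (f (fst z) - g (fst z)) * snd z \<partial>P))"
    using int_sq int_cross int_fstar int_snd by simp
  also have "(\<integral>z. (f (fst z) - g (fst z)) * snd z \<partial>P) = (\<integral>z. (f (fst z) - g (fst z)) * fstar (fst z) \<partial>P)"
    using bounds by (intro integral_mult_snd_eq_fstar[where K = "2 * yinf"]) auto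
  finally show ?thesis
    by (simp add: train_sq_dist_def train_cross_term_def)
qed

lemma AE_excess_loss_bounds:
  assumes f: "bounded_predictor f" and g: "bounded_predictor g"
  shows "AE z in P. \<bar>excess_loss f g z\<bar> \<le> 4 * yinf^2
    \<and> (excess_loss f g z)^2 \<le> 16 * yinf^2 * (f (fst z) - g (fst z))^2"
  using AE_sample_bounded
  by eventually_elim
     (auto simp: excess_loss_def bounded_predictorD[OF f] bounded_predictorD[OF g]
           intro!: abs_sq_loss_diff_le sq_loss_diff_sq_le)

definition deviation_event :: "('a \<Rightarrow> real) \<Rightarrow> ('a \<Rightarrow> real) \<Rightarrow> real \<Rightarrow> nat \<Rightarrow> (nat \<Rightarrow> 'a \<times> real) set" where
  "deviation_event f g u n = {S \<in> space (PiM {..<n} (\<lambda>_. P)).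
      real n * (sqrt (32 * yinf^2 * u * train_sq_dist f g) + 16 * yinf^2 * u / 3)
        \<le> (\<Sum>i<n. (\<integral>z. excess_loss f g z \<partial>P) - excess_loss f g (S i))}"

definition concentration_event :: "('a \<Rightarrow> real) set \<Rightarrow> ('a \<Rightarrow> real) \<Rightarrow> real \<Rightarrow> nat \<Rightarrow> (nat \<Rightarrow> 'a \<times> real) set" where
  "concentration_event F g u n = space (PiM {..<n} (\<lambda>_. P)) - (\<Union>f\<in>F. deviation_event f g u n)"

lemma deviation_event_sets:
  assumes "bounded_predictor f" "bounded_predictor g"
  shows "deviation_event f g u n \<in> sets (PiM {..<n} (\<lambda>_. P))"
  using bounded_predictorD(1)[OF assms(1)] bounded_predictorD(1)[OF assms(2)]
  unfolding deviation_event_def excess_loss_def by measurable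

lemma integrable_excess_loss:
  assumes f: "bounded_predictor f" and g: "bounded_predictor g"
  shows "integrable P (excess_loss f g)" and "integrable P (\<lambda>z. (excess_loss f g z)^2)"
proof -
  note [measurable] = bounded_predictorD(1)[OF f] bounded_predictorD(1)[OF g]
  have [measurable]: "excess_loss f g \<in> borel_measurable P"
    unfolding excess_loss_def by measurable
  show "integrable P (excess_loss f g)"
    using AE_excess_loss_bounds[OF f g]
    by (intro integrable_const_bound[where B = "4 * yinf^2"]) (auto elim!: eventually_mono)
  show "integrable P (\<lambda>z. (excess_loss f g z)^2)"
    using AE_excess_loss_bounds[OF f g]
    by (intro integrable_const_bound[where B = "(4 * yinf^2)^2"])
       (auto elim!: eventually_mono dest: square_le_of_abs_le)
qed

lemma abs_expectation_excess_loss_le: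
  assumes f: "bounded_predictor f" and g: "bounded_predictor g"
  shows "\<bar>expectation (excess_loss f g)\<bar> \<le> 4 * yinf^2"
proof -
  have "\<bar>expectation (excess_loss f g)\<bar> \<le> expectation (\<lambda>z. \<bar>excess_loss f g z\<bar>)"
    by (rule integral_abs_bound)
  also have "\<dots> \<le> 4 * yinf^2"
    using integrable_excess_loss(1)[OF f g] AE_excess_loss_bounds[OF f g]
    by (intro integral_le_const) (auto elim!: eventually_mono)
  finally show ?thesis .
qed

lemma variance_excess_loss_le:
  assumes f: "bounded_predictor f" and g: "bounded_predictor g"
  shows "variance (excess_loss f g) \<le> 16 * yinf^2 * train_sq_dist f g"
proof -
  have "variance (excess_loss f g) = expectation (\<lambda>z. (excess_loss f g z)^2) - (expectation (excess_loss f g))^2"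
    using integrable_excess_loss[OF f g] by (rule variance_eq)
  also have "\<dots> \<le> expectation (\<lambda>z. (excess_loss f g z)^2)"
    by simp
  also have "\<dots> \<le> expectation (\<lambda>z. 16 * yinf^2 * (f (fst z) - g (fst z))^2)"
    using integrable_excess_loss(2)[OF f g] integrable_sq_diff_predictors[OF f g] AE_excess_loss_bounds[OF f g]
    by (intro integral_mono_AE) (auto elim!: eventually_mono)
  also have "\<dots> = 16 * yinf^2 * train_sq_dist f g"
    by (simp add: train_sq_dist_def)
  finally show ?thesis .
qed

lemma measure_deviation_event_le:
  assumes f: "bounded_predictor f" and g: "bounded_predictor g" and u: "0 < u"
  shows "measure (PiM {..<n} (\<lambda>_. P)) (deviation_event f g u n) \<le> exp (- real n * u)"
proof -
  note [measurable] = bounded_predictorD(1)[OF f] bounded_predictorD(1)[OF g]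
  define Z where "Z = excess_loss f g"
  have Z_int: "integrable P Z" "integrable P (\<lambda>z. (Z z)^2)"
    unfolding Z_def by (rule integrable_excess_loss[OF f g])+
  have "measure (PiM {..<n} (\<lambda>_. P)) {S \<in> space (PiM {..<n} (\<lambda>_. P)).
      real n * (sqrt (2 * u * (16 * yinf^2 * train_sq_dist f g)) + 2 * (8 * yinf^2) * u / 3)
        \<le> (\<Sum>i<n. expectation Z - Z (S i))} \<le> exp (- real n * u)"
  proof (rule bernstein_inequality_PiM[OF _ _ _ _ _ _ u])
    show "(\<lambda>z. expectation Z - Z z) \<in> borel_measurable P"
      unfolding Z_def excess_loss_def by measurable
    show "AE z in P. expectation Z - Z z \<le> 8 * yinf^2"
      using AE_excess_loss_bounds[OF f g] abs_expectation_excess_loss_le[OF f g]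
      unfolding Z_def by (auto elim!: eventually_mono)
    show "integrable P (\<lambda>z. (expectation Z - Z z)^2)"
      using Z_int by (simp add: power2_diff)
    show "expectation (\<lambda>z. expectation Z - Z z) = 0"
      using Z_int by (simp add: prob_space)
    show "expectation (\<lambda>z. (expectation Z - Z z)^2) \<le> 16 * yinf^2 * train_sq_dist f g"
      using variance_excess_loss_le[OF f g] unfolding Z_def by (simp add: power2_commute)
    show "0 < 8 * yinf^2"
      using yinf_pos by simp
  qed
  moreover have "sqrt (2 * u * (16 * yinf^2 * train_sq_dist f g)) = sqrt (32 * yinf^2 * u * train_sq_dist f g)"
    by (simp add: algebra_simps)
  ultimately show ?thesis
    by (simp add: deviation_event_def Z_def algebra_simps)
qed

lemma concentration_event_sets:
  assumes "finite F" "\<forall>f\<in>F. bounded_predictor f" "bounded_predictor g"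
  shows "concentration_event F g u n \<in> sets (PiM {..<n} (\<lambda>_. P))"
  using assms unfolding concentration_event_def
  by (intro sets.Diff sets.top sets.finite_UN) (auto intro: deviation_event_sets)

lemma measure_concentration_event_ge:
  assumes F: "finite F" and pred: "\<forall>f\<in>F. bounded_predictor f"
    and g: "bounded_predictor g" and u: "0 < u"
  shows "1 - real (card F) * exp (- real n * u) \<le> measure (PiM {..<n} (\<lambda>_. P)) (concentration_event F g u n)"
proof -
  interpret product: product_prob_space "\<lambda>_. P" "{..<n}" by unfold_locales
  have sets: "deviation_event f g u n \<in> sets (PiM {..<n} (\<lambda>_. P))" if "f \<in> F" for f
    using pred g that by (auto intro: deviation_event_sets)
  have "measure (PiM {..<n} (\<lambda>_. P)) (\<Union>f\<in>F. deviation_event f g u n)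
      \<le> (\<Sum>f\<in>F. measure (PiM {..<n} (\<lambda>_. P)) (deviation_event f g u n))"
    using sets F by (intro product.finite_measure_subadditive_finite) auto
  also have "\<dots> \<le> (\<Sum>f\<in>F. exp (- real n * u))"
    using pred g u by (intro sum_mono measure_deviation_event_le) auto
  finally show ?thesis
    using sets F unfolding concentration_event_def by (subst product.prob_compl) auto
qed

lemma train_sq_dist_fstar_decomposition:
  assumes f: "bounded_predictor f" and g: "bounded_predictor g"
  shows "train_sq_dist f fstar = train_sq_dist f g + 2 * train_cross_term f g + train_sq_dist g fstar"
proof -
  have "train_sq_dist f fstar = (\<integral>z. (f (fst z) - g (fst z))^2
      + 2 * ((f (fst z) - g (fst z)) * (g (fst z) - fstar (fst z))) + (g (fst z) - fstar (fst z))^2 \<partial>P)"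
    unfolding train_sq_dist_def
    by (intro Bochner_Integration.integral_cong) (auto simp: power2_eq_square algebra_simps)
  also have "\<dots> = train_sq_dist f g + 2 * train_cross_term f g + train_sq_dist g fstar"
    using integrable_sq_diff_predictors[OF f g] integrable_sq_diff_predictors[OF g bounded_predictor_fstar]
      integrable_mult_diff_predictors[OF f g g bounded_predictor_fstar]
    by (simp add: train_sq_dist_def train_cross_term_def)
  finally show ?thesis .
qed

lemma train_sq_dist_fstar_le_B_inf:
  assumes g: "bounded_predictor g"
  shows "train_sq_dist g fstar \<le> (B_inf Xi g fstar)^2"
  unfolding train_sq_dist_def
proof (rule integral_le_const)
  show "integrable P (\<lambda>z. (g (fst z) - fstar (fst z))^2)"
    by (rule integrable_sq_diff_predictors[OF g bounded_predictor_fstar])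
  have "bdd_above ((\<lambda>x. \<bar>g x - fstar x\<bar>) ` Xi)"
    using abs_diff_predictors_le[OF g bounded_predictor_fstar] by (rule bdd_aboveI2)
  then have "\<bar>g x - fstar x\<bar> \<le> B_inf Xi g fstar" if "x \<in> Xi" for x
    unfolding B_inf_def using that by (rule cSUP_upper2) simp
  then show "AE z in P. (g (fst z) - fstar (fst z))^2 \<le> (B_inf Xi g fstar)^2"
    using AE_sample_bounded by (auto elim!: eventually_mono intro: square_le_of_abs_le)
qed

lemma erm_excess_risk_bound:
  assumes pred: "\<forall>f\<in>F. bounded_predictor f" and g: "g \<in> F" and u: "0 < u" and n: "0 < n"
    and S: "S \<in> concentration_event F g u n"
    and fh: "fh \<in> F" and erm: "\<forall>f\<in>F. emp_risk n S fh \<le> emp_risk n S f"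
  shows "train_sq_dist fh g + 2 * train_cross_term fh g
    \<le> (if train_cross_term fh g < 0 then 224 * (yinf^2 * u) / 3 - 2 * train_cross_term fh g
        else 128 * (yinf^2 * u) / 3 - sqrt 3 * train_cross_term fh g)"
proof (rule self_bounding_ineq_imp_le_if)
  have "(\<Sum>i<n. excess_loss fh g (S i)) \<le> 0"
    using erm g n by (intro sum_excess_loss_nonpos_if_emp_risk_le) auto
  moreover have "(\<Sum>i<n. (\<integral>z. excess_loss fh g z \<partial>P) - excess_loss fh g (S i))
      < real n * (sqrt (32 * (yinf^2 * u) * train_sq_dist fh g) + 16 * (yinf^2 * u) / 3)"
    using S fh by (auto simp: concentration_event_def deviation_event_def not_le mult.assoc)
  ultimately have "real n * (train_sq_dist fh g + 2 * train_cross_term fh g)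
      < real n * (sqrt (32 * (yinf^2 * u) * train_sq_dist fh g) + 16 * (yinf^2 * u) / 3)"
    using integral_excess_loss pred fh g by (simp add: sum_subtractf)
  then show "train_sq_dist fh g + 2 * train_cross_term fh g
      < sqrt (32 * (yinf^2 * u) * train_sq_dist fh g) + 16 * (yinf^2 * u) / 3"
    using n by simp
qed (use yinf_pos u in \<open>simp_all add: train_sq_dist_nonneg\<close>)

lemma test_risk_le_C_inf_mult_train_risk:
  assumes dtest: "prob_density_on Xi dtest" and dtrain_pos: "\<forall>x\<in>Xi. 0 < dtrain x"
    and C_fin: "bdd_above ((\<lambda>x. \<bar>dtest x / dtrain x\<bar>) ` Xi)" and f: "bounded_predictor f"
  shows "test_risk Xi dtest fstar f \<le> C_inf Xi dtrain dtest * train_sq_dist f fstar"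
proof -
  note [measurable] = bounded_predictorD(1)[OF f]
  have "train_sq_dist f fstar = (LINT x:Xi|lborel. dtrain x * (f x - fstar x)^2)"
    unfolding train_sq_dist_def by (rule integral_fst_P) measurable
  then show ?thesis
    using test_risk_le_C_inf_mult[OF Xi_borel dtrain dtrain_pos dtest C_fin
        bounded_predictorD(1)[OF f] fstar_measurable abs_diff_predictors_le[OF f bounded_predictor_fstar]]
    by simp
qed

lemma A_hat_eq_train_cross_term:
  assumes "bounded_predictor f" "bounded_predictor g"
  shows "A_hat Xi dtrain g fstar f = train_cross_term f g"
proof -
  note [measurable] = bounded_predictorD(1)[OF assms(1)] bounded_predictorD(1)[OF assms(2)]
  show ?thesis
    unfolding A_hat_def train_cross_term_def by (intro integral_fst_P[symmetric]) measurable
qed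

lemma erm_test_risk_bound:
  assumes dtest: "prob_density_on Xi dtest" and dtrain_pos: "\<forall>x\<in>Xi. 0 < dtrain x"
    and C_fin: "bdd_above ((\<lambda>x. \<bar>dtest x / dtrain x\<bar>) ` Xi)"
    and pred: "\<forall>f\<in>F. bounded_predictor f" and g: "g \<in> F" and u: "0 < u" and n: "0 < n"
    and S: "S \<in> concentration_event F g u n"
    and fh: "fh \<in> F" and erm: "\<forall>f\<in>F. emp_risk n S fh \<le> emp_risk n S f"
  shows "test_risk Xi dtest fstar fh \<le> C_inf Xi dtrain dtest *
    (if A_hat Xi dtrain g fstar fh < 0
     then (B_inf Xi g fstar)^2 + 224 * (yinf^2 * u) / 3 - 2 * A_hat Xi dtrain g fstar fh
     else (B_inf Xi g fstar)^2 + 128 * (yinf^2 * u) / 3 - sqrt 3 * A_hat Xi dtrain g fstar fh)"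
proof -
  have fh_pred: "bounded_predictor fh" and g_pred: "bounded_predictor g"
    using pred fh g by blast+
  have C_nonneg: "0 \<le> C_inf Xi dtrain dtest"
    using C_inf_nonneg[OF prob_density_on_nonempty[OF dtrain] C_fin] .
  have "test_risk Xi dtest fstar fh \<le> C_inf Xi dtrain dtest * train_sq_dist fh fstar"
    using dtest dtrain_pos C_fin fh_pred by (rule test_risk_le_C_inf_mult_train_risk)
  also have "\<dots> \<le> C_inf Xi dtrain dtest *
      (train_sq_dist fh g + 2 * train_cross_term fh g + (B_inf Xi g fstar)^2)"
    using train_sq_dist_fstar_decomposition[OF fh_pred g_pred]
      train_sq_dist_fstar_le_B_inf[OF g_pred] C_nonneg
    by (intro mult_left_mono) auto
  also have "\<dots> \<le> C_inf Xi dtrain dtest *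
    (if A_hat Xi dtrain g fstar fh < 0
     then (B_inf Xi g fstar)^2 + 224 * (yinf^2 * u) / 3 - 2 * A_hat Xi dtrain g fstar fh
     else (B_inf Xi g fstar)^2 + 128 * (yinf^2 * u) / 3 - sqrt 3 * A_hat Xi dtrain g fstar fh)"
    using erm_excess_risk_bound[OF pred g u n S fh erm] C_nonneg
    by (intro mult_left_mono) (auto simp: A_hat_eq_train_cross_term[OF fh_pred g_pred])
  finally show ?thesis .
qed

end

theorem theorem1:
  fixes Xi :: "'a::euclidean_space set"
    and dtrain dtest fstar fbar :: "'a \<Rightarrow> real"
    and P :: "('a \<times> real) measure"
    and F :: "('a \<Rightarrow> real) set"
    and yinf \<delta> :: real and n :: nat
  assumes Xi: "Xi \<in> sets lborel"
    and dtrain: "prob_density_on Xi dtrain" and dtrain_pos: "\<forall>x\<in>Xi. 0 < dtrain x"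
    and dtest: "prob_density_on Xi dtest"
    and P_prob: "prob_space P" and P_sets: "sets P = sets (borel \<Otimes>\<^sub>M borel)"
    and P_marg: "distr P borel fst = density lborel (\<lambda>x. ennreal (indicator Xi x * dtrain x))"
    and fstar_meas: "fstar \<in> borel_measurable borel"
    and fstar_condexp: "\<forall>A\<in>sets borel. A \<subseteq> Xi \<longrightarrow>
          (\<integral>z. indicator A (fst z) * snd z \<partial>P) = (\<integral>x. indicator A x * dtrain x * fstar x \<partial>lborel)"
    and F_fin: "finite F" and F_ne: "F \<noteq> {}"
    and F_meas: "\<forall>f\<in>F. f \<in> borel_measurable borel"
    and yinf_pos: "0 < yinf"
    and F_bdd: "\<forall>f\<in>F. \<forall>x\<in>Xi. \<bar>f x\<bar> \<le> yinf"
    and fstar_bdd: "\<forall>x\<in>Xi. \<bar>fstar x\<bar> \<le> yinf"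
    and y_bdd: "AE z in P. \<bar>snd z\<bar> \<le> yinf"
    and fbar: "fbar \<in> F" "\<forall>f\<in>F. test_risk Xi dtest fstar fbar \<le> test_risk Xi dtest fstar f"
    and C_fin: "bdd_above ((\<lambda>x. \<bar>dtest x / dtrain x\<bar>) ` Xi)"
    and n_pos: "0 < n"
    and \<delta>: "0 < \<delta>" "\<delta> < 1"
  shows "\<exists>E\<in>sets (PiM {..<n} (\<lambda>_. P)). measure (PiM {..<n} (\<lambda>_. P)) E \<ge> 1 - \<delta> \<and>
     (\<forall>S\<in>E. \<forall>fh\<in>F. (\<forall>f\<in>F. emp_risk n S fh \<le> emp_risk n S f) \<longrightarrow>
        test_risk Xi dtest fstar fh \<le> C_inf Xi dtrain dtest *
          (if A_hat Xi dtrain fbar fstar fh < 0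
           then (B_inf Xi fbar fstar)^2 + 224 * yinf^2 * ln (real (card F) / \<delta>) / (3 * real n)
                - 2 * A_hat Xi dtrain fbar fstar fh
           else (B_inf Xi fbar fstar)^2 + 128 * yinf^2 * ln (real (card F) / \<delta>) / (3 * real n)
                - sqrt 3 * A_hat Xi dtrain fbar fstar fh))"
proof -
  interpret regression_model P Xi dtrain fstar yinf
    using P_sets Xi dtrain P_marg fstar_meas fstar_condexp yinf_pos fstar_bdd y_bdd
    by (intro regression_model.intro[OF P_prob] regression_model_axioms.intro) simp_all
  have pred: "\<forall>f\<in>F. bounded_predictor f"
    using F_meas F_bdd by (simp add: bounded_predictor_def)
  define u where "u = ln (real (card F) / \<delta>) / real n"
  have "1 \<le> card F"
    using F_fin F_ne by (simp add: Suc_le_eq card_gt_0_iff)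
  then have "0 < u" and card_exp: "real (card F) * exp (- real n * u) = \<delta>"
    using n_pos \<delta> by (auto simp: u_def exp_minus intro!: divide_pos_pos ln_gt_zero)
  have constants: "224 * (yinf^2 * u) / 3 = 224 * yinf^2 * ln (real (card F) / \<delta>) / (3 * real n)"
    "128 * (yinf^2 * u) / 3 = 128 * yinf^2 * ln (real (card F) / \<delta>) / (3 * real n)"
    by (simp_all add: u_def)
  have "bounded_predictor fbar"
    using pred fbar(1) by blast
  show ?thesis
    unfolding constants[symmetric]
  proof (intro bexI[of _ "concentration_event F fbar u n"] conjI)
    show "1 - \<delta> \<le> measure (PiM {..<n} (\<lambda>_. P)) (concentration_event F fbar u n)"
      using measure_concentration_event_ge[OF F_fin pred \<open>bounded_predictor fbar\<close> \<open>0 < u\<close>, where n = n]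
        card_exp by simp
  qed (blast intro: concentration_event_sets[OF F_fin pred \<open>bounded_predictor fbar\<close>]
      erm_test_risk_bound[OF dtest dtrain_pos C_fin pred fbar(1) \<open>0 < u\<close> n_pos])+
qed

end
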